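(* Let $V$ be a real vector space and $C$ a cone in $V$. Assume that $X$ and $Y$ are decomposably $C$-antichain-convex subsets of $V$ that are disjoint. (1) If $X$ is $C$-upward, then $\operatorname{co}(X)$ and $\operatorname{co}(Y)$ are disjoint. (2) If $X$ is $C$-downward, then $\operatorname{co}(X)$ and $\operatorname{co}(Y)$ are disjoint.
   Context: A cone in a real vector space $V$ is a subset $C$ with $\lambda C\subseteq C$ for all $\lambda>0$ (it may be empty and need not contain $0$). A subset $S\subseteq V$ is $C$-antichain-convex iff for all $x,y\in S$ and $\lambda\in[0,1]$ with $y-x\notin C\cup(-C)$ one has $\lambda x+(1-\lambda)y\in S$. $S$ is decomposably $C$-antichain-convex iff $S=S_1+\dots+S_n$ (Minkowski sum) for finitely many $C$-antichain-convex subsets $S_i$ of $V$. $S$ is $C$-upward iff $x\in S$, $y\in V$... precisely: iff for all $x\in S$ and $y$ with $y-x\in C$ one has $y\in S$ (equivalently $S+C\subseteq S$); $S$ is $C$-downward iff for all $x\in S$ and $y$ with $x-y\in C$ one has $y\in S$. $\operatorname{co}$ denotes the convex hull. *)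

theory Defs
  imports "HOL-Analysis.Analysis"
begin

definition is_cone :: "'a::real_vector set \<Rightarrow> bool" where
  "is_cone C \<longleftrightarrow> (\<forall>t::real. t > 0 \<longrightarrow> (\<lambda>v. t *\<^sub>R v) ` C \<subseteq> C)"

definition antichain_convex :: "'a::real_vector set \<Rightarrow> 'a set \<Rightarrow> bool" where
  "antichain_convex C S \<longleftrightarrow>
     (\<forall>x\<in>S. \<forall>y\<in>S. \<forall>t::real. 0 \<le> t \<and> t \<le> 1 \<and> y - x \<notin> C \<union> uminus ` C
        \<longrightarrow> t *\<^sub>R x + (1 - t) *\<^sub>R y \<in> S)"

definition minkowski_sum :: "'a::ab_group_add set \<Rightarrow> 'a set \<Rightarrow> 'a set" where
  "minkowski_sum A B = {a + b | a b. a \<in> A \<and> b \<in> B}"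

definition minkowski_sum_list :: "'a::ab_group_add set list \<Rightarrow> 'a set" where
  "minkowski_sum_list Ss = foldr minkowski_sum Ss {0}"

definition decomp_antichain_convex :: "'a::real_vector set \<Rightarrow> 'a set \<Rightarrow> bool" where
  "decomp_antichain_convex C S \<longleftrightarrow>
     (\<exists>Ss. Ss \<noteq> [] \<and> (\<forall>T\<in>set Ss. antichain_convex C T) \<and> S = minkowski_sum_list Ss)"

definition upward :: "'a::real_vector set \<Rightarrow> 'a set \<Rightarrow> bool" where
  "upward C S \<longleftrightarrow> (\<forall>x\<in>S. \<forall>y. y - x \<in> C \<longrightarrow> y \<in> S)"

definition downward :: "'a::real_vector set \<Rightarrow> 'a set \<Rightarrow> bool" where
  "downward C S \<longleftrightarrow> (\<forall>x\<in>S. \<forall>y. x - y \<in> C \<longrightarrow> y \<in> S)"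

end

theory Submission
  imports Defs
begin

(* The core fact: if S is C-antichain-convex and a C-upward set U contains a point c of co S,
   then U contains a point of S.  Write c as a convex combination of a finite F \<subseteq> S and induct
   on |F|.  Two C-incomparable points of F can be replaced by a single point of the segment between
   them, which again lies in S.  Otherwise F is totally preordered by the recession cone of U,
   a convex cone containing C (C itself need not be convex), and the greatest point t of F
   satisfies t - c \<in> recession cone, hence t \<in> U.  Translating U carries this over to Minkowski
   sums, since co (A + B) = co A + co B.
   If X is C-upward, its complement is (-C)-upward and therefore misses co X, so X is convex; a
   common point of co X and co Y then lies in X, and X meets Y.  The downward case is the upward
   case for the cone -C. *)

lemma mem_uminus_image: "x \<in> uminus ` A \<longleftrightarrow> - x \<in> A"
  for x :: "'a::group_add"
proof
  show "- x \<in> A \<Longrightarrow> x \<in> uminus ` A"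
    by (rule image_eqI[of _ _ "- x"]) simp_all
qed auto

definition recession_cone :: "'a::real_vector set \<Rightarrow> 'a set" where
  "recession_cone U = {v. \<forall>x\<in>U. \<forall>l::real\<ge>0. x + l *\<^sub>R v \<in> U}"

lemma convex_cone_recession_cone: "convex_cone (recession_cone U)"
  unfolding convex_cone_iff
proof (intro conjI ballI allI impI)
  show "0 \<in> recession_cone U"
    by (simp add: recession_cone_def)
next
  fix v w assume v: "v \<in> recession_cone U" and w: "w \<in> recession_cone U"
  show "v + w \<in> recession_cone U"
    unfolding recession_cone_def
  proof (intro CollectI ballI allI impI)
    fix x and l :: real assume "x \<in> U" "0 \<le> l"
    then have "(x + l *\<^sub>R v) + l *\<^sub>R w \<in> U"
      using v w by (simp add: recession_cone_def)
    then show "x + l *\<^sub>R (v + w) \<in> U"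
      by (simp add: algebra_simps)
  qed
next
  fix v and c :: real assume "v \<in> recession_cone U" "0 \<le> c"
  then show "c *\<^sub>R v \<in> recession_cone U"
    by (simp add: recession_cone_def)
qed

lemma recession_cone_add_mem:
  assumes "x \<in> U" "v \<in> recession_cone U"
  shows "x + v \<in> U"
proof -
  have "\<forall>l::real\<ge>0. x + l *\<^sub>R v \<in> U"
    using assms unfolding recession_cone_def by blast
  from this[rule_format, of 1] show ?thesis
    by simp
qed

lemma cone_subset_recession_cone:
  assumes "is_cone C" and "upward C U"
  shows "C \<subseteq> recession_cone U"
  unfolding recession_cone_def
proof (intro subsetI CollectI ballI allI impI)
  fix v x and l :: real assume "v \<in> C" "x \<in> U" "0 \<le> l"
  then show "x + l *\<^sub>R v \<in> U"
    using assms unfolding is_cone_def upward_def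
    by (cases "l = 0") (auto simp: image_subset_iff)
qed

lemma finite_total_transp_has_greatest:
  assumes "finite F" "F \<noteq> {}" "transp r" "\<forall>a\<in>F. \<forall>b\<in>F. r a b \<or> r b a"
  shows "\<exists>t\<in>F. \<forall>x\<in>F. r x t"
  using assms
proof (induction F rule: finite_ne_induct)
  case (singleton a)
  then show ?case by auto
next
  case (insert a F)
  then obtain t where "t \<in> F" "\<forall>x\<in>F. r x t"
    by auto
  with insert.prems show ?case
    by (metis insert_iff transpD)
qed

lemma recession_chain_meets:
  assumes "finite F"
    and chain: "\<forall>a\<in>F. \<forall>b\<in>F. b - a \<in> recession_cone U \<or> a - b \<in> recession_cone U"
    and c: "c \<in> convex hull F" "c \<in> U"
  shows "\<exists>t\<in>F. t \<in> U"
proof -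
  let ?R = "recession_cone U"
  have "F \<noteq> {}"
    using c by auto
  moreover have "transp (\<lambda>a b. b - a \<in> ?R)"
  proof (rule transpI)
    fix a b d assume "b - a \<in> ?R" "d - b \<in> ?R"
    then have "(d - b) + (b - a) \<in> ?R"
      by (intro convex_cone_add[OF convex_cone_recession_cone])
    then show "d - a \<in> ?R"
      by simp
  qed
  ultimately obtain t where t: "t \<in> F" "\<forall>x\<in>F. t - x \<in> ?R"
    using finite_total_transp_has_greatest[OF \<open>finite F\<close>, of "\<lambda>a b. b - a \<in> ?R"] chain
    by blast
  have "convex {x. t - x \<in> ?R}"
  proof (rule convexI, clarsimp)
    fix x y and u v :: real
    assume "t - x \<in> ?R" "t - y \<in> ?R" "0 \<le> u" "0 \<le> v" "u + v = 1"
    then have "u *\<^sub>R (t - x) + v *\<^sub>R (t - y) \<in> ?R"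
      using convex_cone_recession_cone unfolding convex_cone_def by (blast intro: convexD)
    moreover have "u *\<^sub>R (t - x) + v *\<^sub>R (t - y) = (u + v) *\<^sub>R t - (u *\<^sub>R x + v *\<^sub>R y)"
      by (simp add: algebra_simps)
    ultimately show "t - (u *\<^sub>R x + v *\<^sub>R y) \<in> ?R"
      using \<open>u + v = 1\<close> by simp
  qed
  then have "convex hull F \<subseteq> {x. t - x \<in> ?R}"
    using t(2) by (intro hull_minimal) auto
  then have "c + (t - c) \<in> U"
    using c by (intro recession_cone_add_mem) auto
  then show ?thesis
    using t(1) by auto
qed

lemma convex_hull_merge_pair:
  assumes "finite F" "a \<in> F" "b \<in> F" "a \<noteq> b" "c \<in> convex hull F"
  obtains t where "0 \<le> t" "t \<le> 1" "c \<in> convex hull (insert (t *\<^sub>R a + (1 - t) *\<^sub>R b) (F - {a, b}))"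
proof -
  obtain u where u: "\<forall>x\<in>F. 0 \<le> u x" "sum u F = 1" "(\<Sum>x\<in>F. u x *\<^sub>R x) = c"
    using assms(5) unfolding convex_hull_finite[OF assms(1)] by blast
  \<comment> \<open>if both weights vanish, any point of the segment will do\<close>
  define t where "t = (if u a + u b = 0 then 1 else u a / (u a + u b))"
  define p where "p = t *\<^sub>R a + (1 - t) *\<^sub>R b"
  have "0 \<le> u a" "0 \<le> u b"
    using u(1) assms(2,3) by auto
  then have t: "0 \<le> t" "t \<le> 1"
    by (simp_all add: t_def divide_le_eq_1)
  have weight_p: "(u a + u b) *\<^sub>R p = u a *\<^sub>R a + u b *\<^sub>R b"
  proof (cases "u a + u b = 0")
    case True
    then have "u a = 0" "u b = 0"
      using \<open>0 \<le> u a\<close> \<open>0 \<le> u b\<close> by linarith+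
    then show ?thesis by simp
  next
    case False
    then have "(u a + u b) * t = u a" "(u a + u b) * (1 - t) = u b"
      by (simp_all add: t_def right_diff_distrib)
    then show ?thesis
      by (simp add: p_def scaleR_add_right)
  qed
  define y where "y x = (if x \<in> {a, b} then p else x)" for x
  have "(\<Sum>x\<in>F. u x *\<^sub>R y x) = c"
  proof -
    have split: "sum g F = sum g (F - {a, b}) + g a + g b" for g :: "'a \<Rightarrow> 'a"
      using sum.subset_diff[of "{a, b}" F g] assms(1-4) by (simp add: add.assoc)
    have "(\<Sum>x\<in>F - {a, b}. u x *\<^sub>R y x) = (\<Sum>x\<in>F - {a, b}. u x *\<^sub>R x)"
      by (rule sum.cong) (auto simp: y_def)
    then show ?thesis
      using u(3) weight_p unfolding split[of "\<lambda>x. u x *\<^sub>R y x"] split[of "\<lambda>x. u x *\<^sub>R x"]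
      by (simp add: y_def add.assoc scaleR_add_left)
  qed
  moreover have "(\<Sum>x\<in>F. u x *\<^sub>R y x) \<in> convex hull (insert p (F - {a, b}))"
    using u(1,2) by (intro convex_sum[OF assms(1) convex_convex_hull]) (auto simp: y_def hull_inc)
  ultimately show ?thesis
    using that t unfolding p_def by simp
qed

lemma antichain_convexD:
  "antichain_convex C S \<Longrightarrow> x \<in> S \<Longrightarrow> y \<in> S \<Longrightarrow> 0 \<le> t \<Longrightarrow> t \<le> 1
    \<Longrightarrow> y - x \<notin> C \<union> uminus ` C \<Longrightarrow> t *\<^sub>R x + (1 - t) *\<^sub>R y \<in> S"
  unfolding antichain_convex_def by blast

lemma antichain_convex_meets_upward_finite:
  assumes cone: "is_cone C" and S: "antichain_convex C S" and U: "upward C U"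
  shows "finite F \<Longrightarrow> F \<subseteq> S \<Longrightarrow> c \<in> convex hull F \<Longrightarrow> c \<in> U \<Longrightarrow> \<exists>s\<in>S. s \<in> U"
proof (induction "card F" arbitrary: F rule: less_induct)
  case less
  show ?case
  proof (cases "\<exists>a\<in>F. \<exists>b\<in>F. a \<noteq> b \<and> b - a \<notin> C \<union> uminus ` C")
    case True
    then obtain a b where ab: "a \<in> F" "b \<in> F" "a \<noteq> b" "b - a \<notin> C \<union> uminus ` C"
      by blast
    obtain t where t: "0 \<le> t" "t \<le> 1"
      and c: "c \<in> convex hull (insert (t *\<^sub>R a + (1 - t) *\<^sub>R b) (F - {a, b}))"
      using convex_hull_merge_pair[OF less.prems(1) ab(1-3) less.prems(3)] by blast
    define G where "G = insert (t *\<^sub>R a + (1 - t) *\<^sub>R b) (F - {a, b})"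
    have "finite G"
      using less.prems(1) by (simp add: G_def)
    moreover have "G \<subseteq> S"
      using antichain_convexD[OF S _ _ t ab(4)] less.prems(2) ab(1,2) by (auto simp: G_def)
    moreover have "card G < card F"
    proof -
      have "card (F - {a, b}) < card (F - {a})"
        using ab less.prems(1) by (intro psubset_card_mono) auto
      moreover have "card (F - {a}) < card F"
        using ab less.prems(1) by (intro card_Diff1_less)
      ultimately show ?thesis
        using less.prems(1) by (simp add: G_def card_insert_if)
    qed
    ultimately show ?thesis
      using less.hyps c less.prems(4) unfolding G_def by blast
  next
    case False
    note comparable = False
    have C_rec: "C \<subseteq> recession_cone U"
      by (rule cone_subset_recession_cone[OF cone U])
    have "b - a \<in> recession_cone U \<or> a - b \<in> recession_cone U" if "a \<in> F" "b \<in> F" for a b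
    proof (cases "a = b")
      case True
      then show ?thesis
        using convex_cone_contains_0[OF convex_cone_recession_cone] by simp
    next
      case False
      then have "b - a \<in> C \<union> uminus ` C"
        using comparable that by blast
      then have "b - a \<in> C \<or> a - b \<in> C"
        by (simp add: mem_uminus_image)
      then show ?thesis
        using C_rec by blast
    qed
    then show ?thesis
      using recession_chain_meets[OF less.prems(1) _ less.prems(3,4)] less.prems(2)
      by blast
  qed
qed

lemma antichain_convex_meets_upward:
  assumes "is_cone C" "antichain_convex C S" "upward C U" "c \<in> convex hull S" "c \<in> U"
  shows "\<exists>s\<in>S. s \<in> U"
proof -
  obtain F u where "finite F" "F \<subseteq> S" "\<forall>x\<in>F. 0 \<le> u x" "sum u F = 1" "(\<Sum>x\<in>F. u x *\<^sub>R x) = c"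
    using assms(4) unfolding convex_hull_explicit by blast
  then have "c \<in> convex hull F"
    unfolding convex_hull_finite[OF \<open>finite F\<close>] by blast
  then show ?thesis
    using antichain_convex_meets_upward_finite[OF assms(1-3) \<open>finite F\<close> \<open>F \<subseteq> S\<close> _ assms(5)]
    by blast
qed

lemma minkowski_sum_list_Cons: "minkowski_sum_list (S # Ss) = S + minkowski_sum_list Ss"
  by (auto simp: minkowski_sum_list_def minkowski_sum_def set_plus_def)

lemma upward_translate:
  assumes "upward C U"
  shows "upward C {x. x + b \<in> U}"
  unfolding upward_def
proof (intro ballI allI impI CollectI)
  fix x y assume "x \<in> {x. x + b \<in> U}" "y - x \<in> C"
  then have "x + b \<in> U" "(y + b) - (x + b) \<in> C"
    by simp_all
  then show "y + b \<in> U"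
    using assms unfolding upward_def by blast
qed

lemma minkowski_sum_list_meets_upward:
  assumes cone: "is_cone C"
  shows "\<forall>S\<in>set Ss. antichain_convex C S \<Longrightarrow> upward C U \<Longrightarrow> c \<in> convex hull (minkowski_sum_list Ss)
    \<Longrightarrow> c \<in> U \<Longrightarrow> \<exists>y\<in>minkowski_sum_list Ss. y \<in> U"
proof (induction Ss arbitrary: c U)
  case Nil
  then show ?case
    by (simp add: minkowski_sum_list_def)
next
  case (Cons S Ss)
  have "c \<in> convex hull S + convex hull (minkowski_sum_list Ss)"
    using Cons.prems(3) by (simp add: minkowski_sum_list_Cons convex_hull_set_plus)
  then obtain a b where ab: "a \<in> convex hull S" "b \<in> convex hull (minkowski_sum_list Ss)" "c = a + b"
    by (blast elim: set_plus_elim)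
  obtain s where s: "s \<in> S" "s + b \<in> U"
    using antichain_convex_meets_upward[OF cone _ upward_translate[OF Cons.prems(2), of b] ab(1)]
      Cons.prems(1,4) ab(3) by auto
  obtain y where y: "y \<in> minkowski_sum_list Ss" "y + s \<in> U"
    using Cons.IH[OF _ upward_translate[OF Cons.prems(2), of s] ab(2)] Cons.prems(1) s(2)
    by (auto simp: add.commute)
  have "s + y \<in> minkowski_sum_list (S # Ss)"
    unfolding minkowski_sum_list_Cons using s(1) y(1) by (rule set_plus_intro)
  then show ?case
    using y(2) by (metis add.commute)
qed

lemma decomp_antichain_convex_meets_upward:
  assumes "is_cone C" "decomp_antichain_convex C S" "upward C U" "convex hull S \<inter> U \<noteq> {}"
  shows "S \<inter> U \<noteq> {}"
  using assms minkowski_sum_list_meets_upward[OF assms(1)]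
  unfolding decomp_antichain_convex_def by blast

lemma is_cone_uminus: "is_cone C \<Longrightarrow> is_cone (uminus ` C)"
  unfolding is_cone_def by (auto simp: image_image)

lemma antichain_convex_uminus_iff: "antichain_convex (uminus ` C) S \<longleftrightarrow> antichain_convex C S"
proof -
  have "uminus ` C \<union> uminus ` uminus ` C = C \<union> uminus ` C"
    by (auto simp: image_image)
  then show ?thesis
    unfolding antichain_convex_def by simp
qed

lemma decomp_antichain_convex_uminus_iff:
  "decomp_antichain_convex (uminus ` C) S \<longleftrightarrow> decomp_antichain_convex C S"
  by (simp add: decomp_antichain_convex_def antichain_convex_uminus_iff)

lemma upward_uminus_iff: "upward (uminus ` C) S \<longleftrightarrow> downward C S"
  unfolding upward_def downward_def by (simp add: mem_uminus_image)

lemma downward_Compl_iff: "downward C (- S) \<longleftrightarrow> upward C S"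
  unfolding upward_def downward_def by blast

lemma convex_if_upward_decomp_antichain_convex:
  assumes "is_cone C" "decomp_antichain_convex C X" "upward C X"
  shows "convex X"
proof -
  have "c \<in> X" if "c \<in> convex hull X" for c
  proof (rule ccontr)
    assume "c \<notin> X"
    have "upward (uminus ` C) (- X)"
      using assms(3) by (simp add: upward_uminus_iff downward_Compl_iff)
    then have "X \<inter> - X \<noteq> {}"
      using decomp_antichain_convex_meets_upward[OF is_cone_uminus[OF assms(1)]] assms(2)
        that \<open>c \<notin> X\<close> by (auto simp: decomp_antichain_convex_uminus_iff)
    then show False
      by blast
  qed
  then have "convex hull X = X"
    using hull_subset[of X convex] by blast
  then show ?thesis
    by (simp only: convex_hull_eq)
qed

lemma convex_hulls_disjoint_if_upward:
  assumes "is_cone C" "decomp_antichain_convex C X" "decomp_antichain_convex C Y"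
    and "X \<inter> Y = {}" and "upward C X"
  shows "convex hull X \<inter> convex hull Y = {}"
proof -
  have "convex hull X = X"
    using convex_if_upward_decomp_antichain_convex[OF assms(1,2,5)] by (simp only: convex_hull_eq)
  then show ?thesis
    using decomp_antichain_convex_meets_upward[OF assms(1,3,5)] assms(4) by (auto simp: Int_commute)
qed

theorem theorem6:
  fixes C X Y :: "'a::real_vector set"
  assumes "is_cone C"
    and "decomp_antichain_convex C X"
    and "decomp_antichain_convex C Y"
    and "X \<inter> Y = {}"
  shows "(upward C X \<longrightarrow> convex hull X \<inter> convex hull Y = {})
       \<and> (downward C X \<longrightarrow> convex hull X \<inter> convex hull Y = {})"
proof (intro conjI impI)
  show "upward C X \<Longrightarrow> convex hull X \<inter> convex hull Y = {}"
    by (rule convex_hulls_disjoint_if_upward[OF assms])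
  show "downward C X \<Longrightarrow> convex hull X \<inter> convex hull Y = {}"
    using convex_hulls_disjoint_if_upward[OF is_cone_uminus[OF assms(1)] _ _ assms(4)] assms(2,3)
    by (simp add: decomp_antichain_convex_uminus_iff upward_uminus_iff)
qed

end
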